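(* Every finite nonempty left-cancellative semigroup (i.e. $ax=ay$ implies $x=y$) is $K$-thin.
   Context: For a finite nonempty semigroup $S$, the minimal ideal $K(S)$ is the intersection of all nonempty two-sided ideals of $S$. A Rees matrix semigroup $\mathcal{M}(H;I,J;p)$, for sets $I,J$, a group $H$ and a function $p\colon J\times I\to H$, is the set $I\times H\times J$ with product $(i,h,j)(i',h',j')=(i,h\,p(j,i')\,h',j')$. It is known that $K(S)$ is always isomorphic to such a Rees matrix semigroup with $H$ a finite group and $p$ normalized (i.e. $p(j_0,i)=e_H$ and $p(j,i_0)=e_H$ for some fixed $i_0\in I$, $j_0\in J$ and all $i,j$). $S$ is called $K$-thin if $K(S)$ has such a normalized Rees matrix structure with $|I|=1$ or $|J|=1$; equivalently, $K(S)$ is left-simple or right-simple. *)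

theory Defs
  imports "HOL-Algebra.Group"
begin

definition sg_ideal :: "'a::semigroup_mult set \<Rightarrow> bool" where
  "sg_ideal A \<longleftrightarrow> A \<noteq> {} \<and> (\<forall>a\<in>A. \<forall>s. s * a \<in> A \<and> a * s \<in> A)"

definition minimal_ideal :: "'a::semigroup_mult set" where
  "minimal_ideal = \<Inter> {A. sg_ideal A}"

definition rees_carrier :: "'i set \<Rightarrow> ('g,'m) monoid_scheme \<Rightarrow> 'j set \<Rightarrow> ('i \<times> 'g \<times> 'j) set" where
  "rees_carrier I H J = I \<times> carrier H \<times> J"

definition rees_mult :: "('g,'m) monoid_scheme \<Rightarrow> ('j \<Rightarrow> 'i \<Rightarrow> 'g)
    \<Rightarrow> ('i \<times> 'g \<times> 'j) \<Rightarrow> ('i \<times> 'g \<times> 'j) \<Rightarrow> ('i \<times> 'g \<times> 'j)" where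
  "rees_mult H p x y =
     (case x of (i, h, j) \<Rightarrow> case y of (i', h', j') \<Rightarrow> (i, h \<otimes>\<^bsub>H\<^esub> p j i' \<otimes>\<^bsub>H\<^esub> h', j'))"

definition normalized_sandwich :: "'i set \<Rightarrow> ('g,'m) monoid_scheme \<Rightarrow> 'j set \<Rightarrow> ('j \<Rightarrow> 'i \<Rightarrow> 'g) \<Rightarrow> bool" where
  "normalized_sandwich I H J p \<longleftrightarrow>
     (\<forall>j\<in>J. \<forall>i\<in>I. p j i \<in> carrier H) \<and>
     (\<exists>i0\<in>I. \<exists>j0\<in>J. (\<forall>i\<in>I. p j0 i = \<one>\<^bsub>H\<^esub>) \<and> (\<forall>j\<in>J. p j i0 = \<one>\<^bsub>H\<^esub>))"

definition rees_iso :: "'a::semigroup_mult set \<Rightarrow> ('a \<Rightarrow> 'i \<times> 'g \<times> 'j) \<Rightarrow> 'i set \<Rightarrow> ('g,'m) monoid_scheme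
    \<Rightarrow> 'j set \<Rightarrow> ('j \<Rightarrow> 'i \<Rightarrow> 'g) \<Rightarrow> bool" where
  "rees_iso K f I H J p \<longleftrightarrow>
     bij_betw f K (rees_carrier I H J) \<and>
     (\<forall>x\<in>K. \<forall>y\<in>K. f (x * y) = rees_mult H p (f x) (f y))"

text \<open>S is K-thin if K(S) has a normalized Rees matrix structure over a finite group
with |I| = 1 or |J| = 1.  Since S is finite, the index sets and the group can be taken
with elements in nat without loss of generality.\<close>

definition K_thin :: "'a::semigroup_mult itself \<Rightarrow> bool" where
  "K_thin _ \<longleftrightarrow>
     (\<exists>(I::nat set) (J::nat set) (H::nat monoid) (p::nat \<Rightarrow> nat \<Rightarrow> nat) (f::'a \<Rightarrow> nat \<times> nat \<times> nat).
        group H \<and> finite (carrier H) \<and> normalized_sandwich I H J p \<and>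
        rees_iso (minimal_ideal :: 'a set) f I H J p \<and>
        (card I = 1 \<or> card J = 1))"

end

theory Submission
  imports Defs "HOL-Library.Countable_Set"
begin

text \<open>In a finite left-cancellative semigroup every left translation is injective, hence
bijective, so all equations a x = b are solvable: S is a right group. Then S itself is the
minimal ideal, and fixing an idempotent e, the map s \<mapsto> (s e, the right identity of s)
identifies S with the Rees matrix semigroup over the group S e with a single row, the
idempotents as columns and the trivial sandwich matrix.\<close>

lemma finite_left_cancel_solvable:
  assumes left_cancel: "\<And>a x y :: 'a::{finite, semigroup_mult}. a * x = a * y \<Longrightarrow> x = y"
  shows "\<exists>x :: 'a. a * x = b"
proof -
  have "inj (\<lambda>x. a * x)" by (auto intro: injI left_cancel)
  then have "surj (\<lambda>x. a * x)" using finite_UNIV_inj_surj finite_UNIV by blast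
  then show ?thesis by (metis surjD)
qed

lemma minimal_ideal_eq_UNIV:
  assumes right_solvable: "\<And>a b :: 'a::semigroup_mult. \<exists>x. a * x = b"
  shows "(minimal_ideal :: 'a set) = UNIV"
proof -
  have "A = UNIV" if "sg_ideal A" for A :: "'a set"
  proof -
    from that obtain a where a: "a \<in> A" and closed: "\<forall>a\<in>A. \<forall>s. a * s \<in> A"
      unfolding sg_ideal_def by blast
    have "b \<in> A" for b
      using right_solvable[of a b] a closed by blast
    then show ?thesis by blast
  qed
  then show ?thesis unfolding minimal_ideal_def by (auto simp: sg_ideal_def)
qed

definition transport_monoid :: "('g \<Rightarrow> 'b) \<Rightarrow> ('g, 'm) monoid_scheme \<Rightarrow> 'b monoid" where
  "transport_monoid \<phi> H =
     \<lparr>carrier = \<phi> ` carrier H,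
      mult = \<lambda>x y. \<phi> (inv_into (carrier H) \<phi> x \<otimes>\<^bsub>H\<^esub> inv_into (carrier H) \<phi> y),
      one = \<phi> \<one>\<^bsub>H\<^esub>\<rparr>"

definition transport_sandwich ::
    "('i \<Rightarrow> 'i2) \<Rightarrow> ('g \<Rightarrow> 'g2) \<Rightarrow> ('j \<Rightarrow> 'j2) \<Rightarrow> 'i set \<Rightarrow> 'j set \<Rightarrow>
      ('j \<Rightarrow> 'i \<Rightarrow> 'g) \<Rightarrow> 'j2 \<Rightarrow> 'i2 \<Rightarrow> 'g2"
  where "transport_sandwich \<alpha> \<phi> \<beta> I J p j i = \<phi> (p (inv_into J \<beta> j) (inv_into I \<alpha> i))"

lemma group_transport_monoid:
  assumes "group H" and "inj_on \<phi> (carrier H)"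
  shows "group (transport_monoid \<phi> H)"
proof -
  interpret H: group H by fact
  show ?thesis
  proof (rule groupI)
    fix x assume "x \<in> carrier (transport_monoid \<phi> H)"
    then obtain h where "h \<in> carrier H" and "x = \<phi> h" by (auto simp: transport_monoid_def)
    then have "\<phi> (inv\<^bsub>H\<^esub> h) \<in> carrier (transport_monoid \<phi> H)"
      and "\<phi> (inv\<^bsub>H\<^esub> h) \<otimes>\<^bsub>transport_monoid \<phi> H\<^esub> x = \<one>\<^bsub>transport_monoid \<phi> H\<^esub>"
      using \<open>inj_on \<phi> (carrier H)\<close> by (simp_all add: transport_monoid_def)
    then show "\<exists>y\<in>carrier (transport_monoid \<phi> H).
        y \<otimes>\<^bsub>transport_monoid \<phi> H\<^esub> x = \<one>\<^bsub>transport_monoid \<phi> H\<^esub>"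
      by blast
  qed (use \<open>inj_on \<phi> (carrier H)\<close> in \<open>auto simp: transport_monoid_def H.m_assoc\<close>)
qed

context
  fixes \<alpha> :: "'i \<Rightarrow> 'i2" and \<phi> :: "'g \<Rightarrow> 'g2" and \<beta> :: "'j \<Rightarrow> 'j2"
    and I :: "'i set" and H :: "('g, 'm) monoid_scheme" and J :: "'j set"
  assumes inj: "inj_on \<alpha> I" "inj_on \<phi> (carrier H)" "inj_on \<beta> J"
begin

lemma normalized_sandwich_transport:
  assumes "normalized_sandwich I H J p"
  shows "normalized_sandwich (\<alpha> ` I) (transport_monoid \<phi> H) (\<beta> ` J)
    (transport_sandwich \<alpha> \<phi> \<beta> I J p)"
proof -
  from assms obtain i0 j0 where "i0 \<in> I" "j0 \<in> J"
    and "\<forall>i\<in>I. p j0 i = \<one>\<^bsub>H\<^esub>" "\<forall>j\<in>J. p j i0 = \<one>\<^bsub>H\<^esub>"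
    unfolding normalized_sandwich_def by blast
  with inj
  have "\<forall>i\<in>\<alpha> ` I. transport_sandwich \<alpha> \<phi> \<beta> I J p (\<beta> j0) i = \<one>\<^bsub>transport_monoid \<phi> H\<^esub>"
    and "\<forall>j\<in>\<beta> ` J. transport_sandwich \<alpha> \<phi> \<beta> I J p j (\<alpha> i0) = \<one>\<^bsub>transport_monoid \<phi> H\<^esub>"
    by (auto simp: transport_monoid_def transport_sandwich_def)
  with \<open>i0 \<in> I\<close> \<open>j0 \<in> J\<close> assms inj show ?thesis
    by (auto simp: normalized_sandwich_def transport_monoid_def transport_sandwich_def)
qed

lemma rees_iso_transport:
  assumes "monoid H" and iso: "rees_iso K f I H J p" and sandwich: "normalized_sandwich I H J p"
  shows "rees_iso K (map_prod \<alpha> (map_prod \<phi> \<beta>) \<circ> f) (\<alpha> ` I) (transport_monoid \<phi> H) (\<beta> ` J)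
    (transport_sandwich \<alpha> \<phi> \<beta> I J p)"
  unfolding rees_iso_def
proof (intro conjI ballI)
  have "bij_betw (map_prod \<alpha> (map_prod \<phi> \<beta>)) (rees_carrier I H J)
      (rees_carrier (\<alpha> ` I) (transport_monoid \<phi> H) (\<beta> ` J))"
    unfolding rees_carrier_def transport_monoid_def using inj
    by (simp add: bij_betw_map_prod inj_on_imp_bij_betw)
  then show "bij_betw (map_prod \<alpha> (map_prod \<phi> \<beta>) \<circ> f) K
      (rees_carrier (\<alpha> ` I) (transport_monoid \<phi> H) (\<beta> ` J))"
    using iso by (auto simp: rees_iso_def intro: bij_betw_trans)
  fix x y assume "x \<in> K" "y \<in> K"
  moreover obtain i h j i' h' j' where fx: "f x = (i, h, j)" and fy: "f y = (i', h', j')"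
    by (metis prod.exhaust)
  ultimately have "(i, h, j) \<in> rees_carrier I H J" "(i', h', j') \<in> rees_carrier I H J"
    and "f (x * y) = (i, h \<otimes>\<^bsub>H\<^esub> p j i' \<otimes>\<^bsub>H\<^esub> h', j')"
    using iso by (auto simp: rees_iso_def rees_mult_def dest: bij_betw_apply)
  moreover have "p j i' \<in> carrier H" if "j \<in> J" "i' \<in> I"
    using sandwich that by (simp add: normalized_sandwich_def)
  ultimately show "(map_prod \<alpha> (map_prod \<phi> \<beta>) \<circ> f) (x * y) =
      rees_mult (transport_monoid \<phi> H) (transport_sandwich \<alpha> \<phi> \<beta> I J p)
        ((map_prod \<alpha> (map_prod \<phi> \<beta>) \<circ> f) x) ((map_prod \<alpha> (map_prod \<phi> \<beta>) \<circ> f) y)"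
    using fx fy inj monoid.m_closed[OF \<open>monoid H\<close>]
    by (simp add: rees_carrier_def rees_mult_def transport_monoid_def transport_sandwich_def)
qed

end

lemma K_thin_if_rees_iso:
  fixes H :: "('g, 'm) monoid_scheme" and f :: "'a::semigroup_mult \<Rightarrow> 'i \<times> 'g \<times> 'j"
  assumes "group H" and "finite (carrier H)" and "countable I" and "countable J"
    and "normalized_sandwich I H J p"
    and "rees_iso (minimal_ideal :: 'a set) f I H J p"
    and "card I = 1 \<or> card J = 1"
  shows "K_thin TYPE('a)"
proof -
  define \<alpha> \<phi> \<beta> where "\<alpha> = to_nat_on I" and "\<phi> = to_nat_on (carrier H)" and "\<beta> = to_nat_on J"
  have inj: "inj_on \<alpha> I" "inj_on \<phi> (carrier H)" "inj_on \<beta> J"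
    unfolding \<alpha>_def \<phi>_def \<beta>_def using assms(2-4) by (auto intro: countable_finite)
  have "group (transport_monoid \<phi> H)"
    using assms(1) inj(2) by (rule group_transport_monoid)
  moreover have "finite (carrier (transport_monoid \<phi> H))"
    using assms(2) by (simp add: transport_monoid_def)
  moreover have "card (\<alpha> ` I) = 1 \<or> card (\<beta> ` J) = 1"
    using assms(7) inj by (simp add: card_image)
  ultimately show ?thesis
    unfolding K_thin_def
    using normalized_sandwich_transport[OF inj assms(5)]
      rees_iso_transport[OF inj group.is_monoid[OF assms(1)] assms(6,5)]
    by blast
qed

definition right_identity :: "'a::semigroup_mult \<Rightarrow> 'a" where
  "right_identity s = (SOME e. s * e = s)"

text \<open>For idempotent e the carrier is the principal left ideal S e.\<close>

definition left_ideal_monoid :: "'a::semigroup_mult \<Rightarrow> 'a monoid" where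
  "left_ideal_monoid e = \<lparr>carrier = {x. x * e = x}, mult = (*), one = e\<rparr>"

context
  assumes left_cancel: "\<And>a x y :: 'a::semigroup_mult. a * x = a * y \<Longrightarrow> x = y"
    and right_solvable: "\<And>a b :: 'a. \<exists>x. a * x = b"
begin

lemma idempotent_mult_left:
  fixes e x :: 'a
  assumes "e * e = e"
  shows "e * x = x"
  using left_cancel[of e "e * x" x] assms by (simp add: mult.assoc[symmetric])

lemma mult_right_identity: "s * right_identity s = (s :: 'a)"
  unfolding right_identity_def using right_solvable by (metis (mono_tags) someI_ex)

lemma right_identity_unique:
  fixes s e :: 'a
  assumes "s * e = s"
  shows "right_identity s = e"
  using left_cancel[of s "right_identity s" e] mult_right_identity assms by simp

lemma right_identity_idempotent: "right_identity s * right_identity s = right_identity (s :: 'a)"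
  by (metis left_cancel mult.assoc mult_right_identity)

lemma right_identity_mult: "right_identity (x * y) = right_identity (y :: 'a)"
  by (rule right_identity_unique) (simp add: mult.assoc mult_right_identity)

lemma group_left_ideal_monoid:
  fixes e :: 'a
  assumes e: "e * e = e"
  shows "group (left_ideal_monoid e)"
proof (rule groupI)
  show "\<exists>y\<in>carrier (left_ideal_monoid e). y \<otimes>\<^bsub>left_ideal_monoid e\<^esub> x = \<one>\<^bsub>left_ideal_monoid e\<^esub>"
    if "x \<in> carrier (left_ideal_monoid e)" for x
  proof -
    obtain y where y: "x * y = e" using right_solvable by blast
    have "x * (y * x) = x * e"
      using y that idempotent_mult_left[OF e]
      by (simp add: left_ideal_monoid_def mult.assoc[symmetric])
    then have "y * x = e" using left_cancel by blast
    then have "(y * e) * x = e" using idempotent_mult_left[OF e] by (simp add: mult.assoc)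
    moreover have "y * e \<in> carrier (left_ideal_monoid e)"
      using e by (simp add: left_ideal_monoid_def mult.assoc)
    ultimately show ?thesis by (auto simp: left_ideal_monoid_def)
  qed
qed (simp_all add: left_ideal_monoid_def mult.assoc idempotent_mult_left[OF e] e)

lemma right_group_rees_iso:
  fixes e :: 'a
  assumes e: "e * e = e"
  shows "rees_iso UNIV (\<lambda>s. ((), s * e, right_identity s))
    {()} (left_ideal_monoid e) {x :: 'a. x * x = x} (\<lambda>_ _. e)"
  unfolding rees_iso_def
proof
  let ?f = "\<lambda>s. ((), s * e, right_identity s)"
  have "s * e * right_identity s = s" for s
    by (metis idempotent_mult_left[OF e] mult.assoc mult_right_identity)
  then have "inj ?f" by (intro inj_on_inverseI[of _ "\<lambda>(_, g, h). g * h"]) simp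
  moreover have "range ?f = rees_carrier {()} (left_ideal_monoid e) {x :: 'a. x * x = x}"
  proof
    show "range ?f \<subseteq> rees_carrier {()} (left_ideal_monoid e) {x :: 'a. x * x = x}"
      using e right_identity_idempotent
      by (auto simp: rees_carrier_def left_ideal_monoid_def mult.assoc)
    show "rees_carrier {()} (left_ideal_monoid e) {x :: 'a. x * x = x} \<subseteq> range ?f"
    proof
      fix z assume "z \<in> rees_carrier {()} (left_ideal_monoid e) {x :: 'a. x * x = x}"
      then obtain g h :: 'a where g: "g * e = g" and h: "h * h = h" and z: "z = ((), g, h)"
        by (auto simp: rees_carrier_def left_ideal_monoid_def)
      have "g * h * e = g" using g idempotent_mult_left[OF h] by (simp add: mult.assoc)
      moreover have "right_identity (g * h) = h"
        using h by (intro right_identity_unique) (simp add: mult.assoc)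
      ultimately show "z \<in> range ?f" using z by (intro range_eqI[where x = "g * h"]) simp
    qed
  qed
  ultimately show "bij_betw ?f UNIV (rees_carrier {()} (left_ideal_monoid e) {x :: 'a. x * x = x})"
    by (simp add: bij_betw_def)
  show "\<forall>x\<in>UNIV. \<forall>y\<in>UNIV. ?f (x * y) = rees_mult (left_ideal_monoid e) (\<lambda>_ _. e) (?f x) (?f y)"
    using e idempotent_mult_left[OF e]
    by (simp add: rees_mult_def left_ideal_monoid_def right_identity_mult mult.assoc)
qed

end

theorem proposition7p10:
  assumes left_cancel: "\<And>a x y :: 'a::{finite, semigroup_mult}. a * x = a * y \<Longrightarrow> x = y"
  shows "K_thin TYPE('a)"
proof -
  have right_solvable: "\<exists>x. a * x = b" for a b :: 'a
    using left_cancel by (rule finite_left_cancel_solvable)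
  define e :: 'a where "e = right_identity undefined"
  have e: "e * e = e"
    unfolding e_def using left_cancel right_solvable by (rule right_identity_idempotent)
  have "normalized_sandwich {()} (left_ideal_monoid e) {x :: 'a. x * x = x} (\<lambda>_ _. e)"
    using e by (auto simp: normalized_sandwich_def left_ideal_monoid_def)
  moreover have "rees_iso (minimal_ideal :: 'a set) (\<lambda>s. ((), s * e, right_identity s))
      {()} (left_ideal_monoid e) {x :: 'a. x * x = x} (\<lambda>_ _. e)"
    unfolding minimal_ideal_eq_UNIV[OF right_solvable]
    using left_cancel right_solvable e by (rule right_group_rees_iso)
  moreover have "group (left_ideal_monoid e)"
    using left_cancel right_solvable e by (rule group_left_ideal_monoid)
  ultimately show ?thesis
    by (intro K_thin_if_rees_iso) auto
qed

end
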